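(* Let $H\Gamma=(C,\{\mathcal W,\mathcal X,\mathcal Y,\mathcal Z\},G_{zx},G_{wy})$ be a Lagrangian hypercube diagram and $L$ the embedded Legendrian torus obtained as the lift of the Lagrangian torus it determines. Then the Maslov number of $L$ equals $2\gcd(w(G_{zx}),w(G_{wy}))$ (a non-negative integer), where $w(G)=\frac14(\#\text{counterclockwise corners of }G-\#\text{clockwise corners of }G)$.
   Context: Grid conventions. In a plane with coordinates $(a,b)$ (below $(a,b)=(w,y)$ or $(a,b)=(z,x)$), an immersed grid diagram of size $n$ is an $n\times n$ grid of unit cells in $[0,n]^2$ with two kinds of markings at centers of cells, each row and each column containing exactly one marking of each kind; joining each marking of the first kind to the marking of the second kind in its row by an $a$-parallel segment, and each marking of the second kind to the marking of the first kind in its column by a $b$-parallel segment, gives an oriented connected closed piecewise-linear curve, with no crossing information, viewed as an immersion $\gamma:\mathbb{R}/2\pi\mathbb{Z}\to\mathbb{R}^2$, $\theta\mapsto(a(\theta),b(\theta))$. It is a Lagrangian grid diagram if (1) $\int_0^{2\pi}b\,a'\,d\theta=0$ and (2) $\int_{\theta_0}^{\theta_1}b\,a'\,d\theta\neq0$ whenever $\theta_0\neq\theta_1$ and $\gamma(\theta_0)=\gamma(\theta_1)$. For a crossing $c=\gamma(\theta_0)=\gamma(\theta_1)$ put $|\Delta t(c)|=|\int_{\theta_0}^{\theta_1}b\,a'\,d\theta|$. The corners are the markings; a corner is counterclockwise (resp. clockwise) if the curve turns left (resp. right) there relative to the orientation of the $(a,b)$-plane. Hypercube diagrams. Let $C=[0,n]^4$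 with coordinates $(w,x,y,z)$. A flat is a product in which two coordinates range over $[0,n]$ and the other two over unit intervals $[k,k+1]$, named by its two full coordinates; a cube is a product in which three coordinates range over $[0,n]$ and one over a unit interval. Markings are points with coordinates in $\mathbb{Z}+\frac12$ labelled $W,X,Y,Z$. Marking conditions: each cube contains exactly one marking of each label; each cube contains exactly two flats containing exactly three markings; in each such flat the three markings form a right angle with rays parallel to coordinate axes; its vertex is $W$ iff the flat is a $zw$-flat, $X$ iff a $wx$-flat, $Y$ iff an $xy$-flat, $Z$ iff a $yz$-flat. Join each $W$ to an $X$ by a $w$-parallel segment, each $X$ to a $Y$ by an $x$-parallel segment, each $Y$ to a $Z$ by a $y$-parallel segment and each $Z$ to a $W$ by a $z$-parallel segment; the projections of this curve to the $(w,y)$- and $(z,x)$-planes are immersed grid diagrams $G_{wy}$ ($(a,b)=(w,y)$) and $G_{zx}$ ($(a,b)=(z,x)$). $H\Gamma$ is a Lagrangian hypercube diagram if the marking conditions hold, $G_{wy},G_{zx}$ are Lagrangian grid diagrams, and $|\Delta t(c)|\neq|\Delta t(c')|$ for all crossings $c$ of $G_{zx}$ and $c'$ of $G_{wy}$. Torus and lift. With $G_{zx}$ parametrized by $s\mapsto(z(s),x(s))$ and $G_{wy}$ by $u\mapsto(w(u),y(u))$ (corners slightly smoothed preserving (1),(2)), the torus is $i(s,u)=(w(u),x(s),y(u),z(s))$, Lagrangian for $\omega=dw\wedge dy+dz\wedge dx$. In $\mathbb{R}^5$ with coordinates $(w,x,y,z,t)$ and contact form $dt-y\,dw-x\,dz$,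 the lift is $L=\{(i(p),t(p))\}$, $t(p)=t_0+\int_\gamma(y\,dw+x\,dz)$ along a path from a base point to $p$. The Maslov index of a loop is the Maslov index of the loop of (unoriented) Lagrangian tangent planes of $i$ along it. The Maslov number of $L$ is the smallest positive integer that is the Maslov index of some loop in $L$, and $0$ if every loop has Maslov index $0$; here $\gcd(0,0)=0$. *)

theory Defs
  imports "HOL-Complex_Analysis.Complex_Analysis"
begin

text \<open>A planar curve is c :: real => real * real, theta |-> (a(theta), b(theta)),
  2pi-periodic. The integral of b a' over [t0,t1].\<close>

definition dt_int :: "(real \<Rightarrow> real \<times> real) \<Rightarrow> real \<Rightarrow> real \<Rightarrow> real" where
  "dt_int c t0 t1 = integral {t0..t1} (\<lambda>\<theta>. snd (c \<theta>) * vector_derivative (\<lambda>t. fst (c t)) (at \<theta>))"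

definition lag_cond1 :: "(real \<Rightarrow> real \<times> real) \<Rightarrow> bool" where
  "lag_cond1 c \<longleftrightarrow> dt_int c 0 (2*pi) = 0"

definition crossings :: "(real \<Rightarrow> real \<times> real) \<Rightarrow> (real \<times> real) set" where
  "crossings c = {(t0, t1). 0 \<le> t0 \<and> t0 < t1 \<and> t1 < 2*pi \<and> c t0 = c t1}"

definition lag_cond2 :: "(real \<Rightarrow> real \<times> real) \<Rightarrow> bool" where
  "lag_cond2 c \<longleftrightarrow> (\<forall>(t0, t1) \<in> crossings c. dt_int c t0 t1 \<noteq> 0)"

text \<open>A grid diagram of size n is given by the cyclic list vs of its 2n markings in the order
  in which the curve visits them: vs!(2i) are the markings of the first kind, vs!(2i+1) those of
  the second kind; integer pair (p,q) stands for the cell centre (p+1/2, q+1/2).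
  Segment vs!(2i) -> vs!(2i+1) is a-parallel (same row), vs!(2i+1) -> vs!(2i+2) is b-parallel.\<close>

definition immersed_grid :: "nat \<Rightarrow> (int \<times> int) list \<Rightarrow> bool" where
  "immersed_grid n vs \<longleftrightarrow>
     n \<ge> 1 \<and> length vs = 2*n \<and>
     (\<forall>k < 2*n. 0 \<le> fst (vs!k) \<and> fst (vs!k) < int n \<and> 0 \<le> snd (vs!k) \<and> snd (vs!k) < int n) \<and>
     (\<forall>r. 0 \<le> r \<and> r < int n \<longrightarrow>
        card {i. i < n \<and> snd (vs!(2*i)) = r} = 1 \<and> card {i. i < n \<and> snd (vs!(2*i+1)) = r} = 1 \<and>
        card {i. i < n \<and> fst (vs!(2*i)) = r} = 1 \<and> card {i. i < n \<and> fst (vs!(2*i+1)) = r} = 1) \<and>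
     (\<forall>i < n. snd (vs!(2*i)) = snd (vs!(2*i+1)) \<and> fst (vs!(2*i+1)) = fst (vs!((2*i+2) mod (2*n)))) \<and>
     (\<forall>k < 2*n. vs!k \<noteq> vs!((k+1) mod (2*n)))"

definition grid_pt :: "(int \<times> int) list \<Rightarrow> nat \<Rightarrow> real \<times> real" where
  "grid_pt vs k = (real_of_int (fst (vs!k)) + 1/2, real_of_int (snd (vs!k)) + 1/2)"

text \<open>Piecewise-linear 2pi-periodic parametrization: the k-th segment is traversed on
  [2 pi k/N, 2 pi (k+1)/N], N = length vs.\<close>
definition grid_param :: "(int \<times> int) list \<Rightarrow> real \<Rightarrow> real \<times> real" where
  "grid_param vs \<theta> =
     (let N = length vs; h = 2*pi / real N; j = \<lfloor>\<theta> / h\<rfloor>; \<tau> = \<theta> / h - real_of_int j;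
          k = nat (j mod int N)
      in (1 - \<tau>) *\<^sub>R grid_pt vs k + \<tau> *\<^sub>R grid_pt vs ((k+1) mod N))"

definition lagrangian_grid :: "nat \<Rightarrow> (int \<times> int) list \<Rightarrow> bool" where
  "lagrangian_grid n vs \<longleftrightarrow> immersed_grid n vs \<and> lag_cond1 (grid_param vs) \<and> lag_cond2 (grid_param vs)"

definition dir_in :: "(int \<times> int) list \<Rightarrow> nat \<Rightarrow> real \<times> real" where
  "dir_in vs k = grid_pt vs k - grid_pt vs ((k + length vs - 1) mod length vs)"

definition dir_out :: "(int \<times> int) list \<Rightarrow> nat \<Rightarrow> real \<times> real" where
  "dir_out vs k = grid_pt vs ((k+1) mod length vs) - grid_pt vs k"

definition cross2 :: "real \<times> real \<Rightarrow> real \<times> real \<Rightarrow> real" where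
  "cross2 u v = fst u * snd v - snd u * fst v"

definition ccw_corners :: "(int \<times> int) list \<Rightarrow> nat" where
  "ccw_corners vs = card {k. k < length vs \<and> cross2 (dir_in vs k) (dir_out vs k) > 0}"

definition cw_corners :: "(int \<times> int) list \<Rightarrow> nat" where
  "cw_corners vs = card {k. k < length vs \<and> cross2 (dir_in vs k) (dir_out vs k) < 0}"

definition grid_w :: "(int \<times> int) list \<Rightarrow> real" where
  "grid_w vs = (real (ccw_corners vs) - real (cw_corners vs)) / 4"

text \<open>Points (w,x,y,z) :: int^4; integer k stands for the coordinate k+1/2.
  Coordinate indices: 0 = w, 1 = x, 2 = y, 3 = z.  A hypercube diagram of size n is given by
  the cyclic list ps of its 4n markings in the order the curve visits them:
  ps!(4j) = W_j, ps!(4j+1) = X_j, ps!(4j+2) = Y_j, ps!(4j+3) = Z_j (label = index mod 4).\<close>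

definition coord :: "nat \<Rightarrow> int \<times> int \<times> int \<times> int \<Rightarrow> int" where
  "coord c p = (case p of (w, x, y, z) \<Rightarrow> [w, x, y, z] ! c)"

definition markings :: "(int \<times> int \<times> int \<times> int) list \<Rightarrow> (nat \<times> (int \<times> int \<times> int \<times> int)) set" where
  "markings ps = {(j mod 4, ps!j) | j. j < length ps}"

definition flat_marks :: "(int \<times> int \<times> int \<times> int) list \<Rightarrow> nat \<Rightarrow> int \<Rightarrow> nat \<Rightarrow> int
     \<Rightarrow> (nat \<times> (int \<times> int \<times> int \<times> int)) set" where
  "flat_marks ps c k d l = {(lab, p) \<in> markings ps. coord c p = k \<and> coord d p = l}"

definition differs_only_in :: "nat \<Rightarrow> int \<times> int \<times> int \<times> int \<Rightarrow> int \<times> int \<times> int \<times> int \<Rightarrow> bool" where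
  "differs_only_in d p q \<longleftrightarrow> coord d p \<noteq> coord d q \<and> (\<forall>c < 4. c \<noteq> d \<longrightarrow> coord c p = coord c q)"

definition marking_conditions :: "nat \<Rightarrow> (int \<times> int \<times> int \<times> int) list \<Rightarrow> bool" where
  "marking_conditions n ps \<longleftrightarrow>
     n \<ge> 1 \<and> length ps = 4*n \<and>
     (\<forall>j < 4*n. \<forall>c < 4. 0 \<le> coord c (ps!j) \<and> coord c (ps!j) < int n) \<and>
     \<comment> \<open>each cube contains exactly one marking of each label\<close>
     (\<forall>c < 4. \<forall>k. 0 \<le> k \<and> k < int n \<longrightarrow>
        (\<forall>lab < 4. card {p. (lab, p) \<in> markings ps \<and> coord c p = k} = 1)) \<and>
     \<comment> \<open>each cube contains exactly two flats containing exactly three markings\<close>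
     (\<forall>c < 4. \<forall>k. 0 \<le> k \<and> k < int n \<longrightarrow>
        card {(d, l). d < 4 \<and> d \<noteq> c \<and> 0 \<le> l \<and> l < int n \<and> card (flat_marks ps c k d l) = 3} = 2) \<and>
     \<comment> \<open>in each such flat: right angle, vertex label determined by the flat type\<close>
     (\<forall>c < 4. \<forall>d < 4. \<forall>k l. c \<noteq> d \<and> 0 \<le> k \<and> k < int n \<and> 0 \<le> l \<and> l < int n \<and>
        card (flat_marks ps c k d l) = 3 \<longrightarrow>
        (\<exists>lv v lq q lr r d1 d2.
           flat_marks ps c k d l = {(lv, v), (lq, q), (lr, r)} \<and>
           d1 \<noteq> d2 \<and> differs_only_in d1 v q \<and> differs_only_in d2 v r \<and>
           (let full = {0..<4} - {c, d} in
              (lv = 0 \<longleftrightarrow> full = {3, 0}) \<and> (lv = 1 \<longleftrightarrow> full = {0, 1}) \<and>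
              (lv = 2 \<longleftrightarrow> full = {1, 2}) \<and> (lv = 3 \<longleftrightarrow> full = {2, 3}))))"

text \<open>Joining: W->X is w-parallel, X->Y x-parallel, Y->Z y-parallel, Z->W z-parallel.\<close>
definition hyper_joined :: "nat \<Rightarrow> (int \<times> int \<times> int \<times> int) list \<Rightarrow> bool" where
  "hyper_joined n ps \<longleftrightarrow> (\<forall>j < 4*n. \<forall>c < 4. c \<noteq> j mod 4 \<longrightarrow> coord c (ps!((j+1) mod (4*n))) = coord c (ps!j))"

text \<open>Projection to the (w,y)-plane (a,b) = (w,y): first kind W_j, second kind X_j.\<close>
definition G_wy :: "nat \<Rightarrow> (int \<times> int \<times> int \<times> int) list \<Rightarrow> (int \<times> int) list" where
  "G_wy n ps = concat (map (\<lambda>j. [(coord 0 (ps!(4*j)), coord 2 (ps!(4*j))),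
                                  (coord 0 (ps!(4*j+1)), coord 2 (ps!(4*j+1)))]) [0..<n])"

text \<open>Projection to the (z,x)-plane (a,b) = (z,x): first kind Y_j (= Z_j), second kind W_(j+1) (= X_(j+1)).\<close>
definition G_zx :: "nat \<Rightarrow> (int \<times> int \<times> int \<times> int) list \<Rightarrow> (int \<times> int) list" where
  "G_zx n ps = concat (map (\<lambda>j. [(coord 3 (ps!(4*j+2)), coord 1 (ps!(4*j+2))),
                                  (coord 3 (ps!((4*j+4) mod (4*n))), coord 1 (ps!((4*j+4) mod (4*n))))]) [0..<n])"

definition lagrangian_hypercube :: "nat \<Rightarrow> (int \<times> int \<times> int \<times> int) list \<Rightarrow> bool" where
  "lagrangian_hypercube n ps \<longleftrightarrow>
     marking_conditions n ps \<and> hyper_joined n ps \<and>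
     lagrangian_grid n (G_zx n ps) \<and> lagrangian_grid n (G_wy n ps) \<and>
     (\<forall>(s0, s1) \<in> crossings (grid_param (G_zx n ps)). \<forall>(u0, u1) \<in> crossings (grid_param (G_wy n ps)).
        \<bar>dt_int (grid_param (G_zx n ps)) s0 s1\<bar> \<noteq> \<bar>dt_int (grid_param (G_wy n ps)) u0 u1\<bar>)"

definition smoothing :: "(int \<times> int) list \<Rightarrow> (real \<Rightarrow> real \<times> real) \<Rightarrow> bool" where
  "smoothing vs g \<longleftrightarrow>
     (let N = length vs in
      \<exists>\<epsilon> g'. 0 < \<epsilon> \<and> \<epsilon> < pi / real N \<and>
        (\<forall>\<theta>. g (\<theta> + 2*pi) = g \<theta>) \<and>
        (\<forall>\<theta>. (g has_vector_derivative g' \<theta>) (at \<theta>)) \<and> continuous_on UNIV g' \<and> (\<forall>\<theta>. g' \<theta> \<noteq> 0) \<and>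
        (\<forall>\<theta>. (\<forall>k < N. \<forall>m::int. \<bar>\<theta> - 2*pi*real k / real N - 2*pi*real_of_int m\<bar> \<ge> \<epsilon>)
              \<longrightarrow> g \<theta> = grid_param vs \<theta>) \<and>
        (\<forall>\<theta>. \<forall>k < N. \<forall>m::int. \<bar>\<theta> - 2*pi*real k / real N - 2*pi*real_of_int m\<bar> < \<epsilon> \<longrightarrow>
              (\<exists>\<alpha> \<beta>. \<alpha> \<ge> 0 \<and> \<beta> \<ge> 0 \<and> g' \<theta> = \<alpha> *\<^sub>R dir_in vs k + \<beta> *\<^sub>R dir_out vs k)) \<and>
        lag_cond1 g \<and> lag_cond2 g)"

definition torus_map :: "(real \<Rightarrow> real \<times> real) \<Rightarrow> (real \<Rightarrow> real \<times> real) \<Rightarrow> real \<times> real \<Rightarrow> real \<times> real \<times> real \<times> real" where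
  "torus_map gzx gwy p = (case p of (s, u) \<Rightarrow> (fst (gwy u), snd (gzx s), snd (gwy u), fst (gzx s)))"

text \<open>Complex structure compatible with omega = dw/\dy + dz/\dx: (w,x,y,z) |-> (w + i y, z + i x).
  Complex determinant of two vectors of C^2.\<close>
definition cdet :: "real \<times> real \<times> real \<times> real \<Rightarrow> real \<times> real \<times> real \<times> real \<Rightarrow> complex" where
  "cdet p q = (case p of (w1, x1, y1, z1) \<Rightarrow> case q of (w2, x2, y2, z2) \<Rightarrow>
      Complex w1 y1 * Complex z2 x2 - Complex z1 x1 * Complex w2 y2)"

text \<open>det^2 of a Lagrangian plane V: det(U)^2 for a unitary frame U of V, computed from any real
  basis (a,b) of V as det_C(a,b)^2/|det_C(a,b)|^2.\<close>
definition det_sq :: "(real \<times> real \<times> real \<times> real) set \<Rightarrow> complex" where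
  "det_sq V = (SOME d. \<exists>a b. a \<in> V \<and> b \<in> V \<and> span {a, b} = V \<and> cdet a b \<noteq> 0 \<and>
                           d = (cdet a b)\<^sup>2 / complex_of_real ((cmod (cdet a b))\<^sup>2))"

definition tangent_plane :: "(real \<times> real \<Rightarrow> real \<times> real \<times> real \<times> real) \<Rightarrow> real \<times> real \<Rightarrow> (real \<times> real \<times> real \<times> real) set" where
  "tangent_plane i p = range (frechet_derivative i (at p))"

text \<open>Loops in the torus (R/2piZ)^2, lifted to R^2; by embeddedness of the lift these are the
  loops in L.  Maslov index = degree of det^2 of the loop of tangent planes.\<close>
definition torus_loop :: "(real \<Rightarrow> real \<times> real) \<Rightarrow> bool" where
  "torus_loop q \<longleftrightarrow> continuous_on {0..1} q \<and>
     (\<exists>m1 m2 :: int. q 1 = q 0 + (2*pi*real_of_int m1, 2*pi*real_of_int m2))"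

definition maslov_index :: "(real \<Rightarrow> real \<times> real) \<Rightarrow> (real \<Rightarrow> real \<times> real) \<Rightarrow> (real \<Rightarrow> real \<times> real) \<Rightarrow> complex" where
  "maslov_index gzx gwy q = winding_number (\<lambda>t. det_sq (tangent_plane (torus_map gzx gwy) (q t))) 0"

definition maslov_indices :: "(real \<Rightarrow> real \<times> real) \<Rightarrow> (real \<Rightarrow> real \<times> real) \<Rightarrow> int set" where
  "maslov_indices gzx gwy = {m. \<exists>q. torus_loop q \<and> maslov_index gzx gwy q = of_int m}"

definition maslov_number :: "(real \<Rightarrow> real \<times> real) \<Rightarrow> (real \<Rightarrow> real \<times> real) \<Rightarrow> int" where
  "maslov_number gzx gwy =
     (if \<forall>m \<in> maslov_indices gzx gwy. m = 0 then 0
      else (LEAST m. m > 0 \<and> m \<in> maslov_indices gzx gwy))"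

end

theory Submission
  imports Defs
begin

text \<open>The Maslov index of a loop in the torus is the winding number of \<open>det\<^sup>2\<close> of its tangent
  planes. The torus is the product of the two smoothed grid curves, so at \<open>(s, u)\<close> this is
  \<open>exp (2 i (\<theta>\<^sub>1 s + \<theta>\<^sub>2 u))\<close>, where \<open>\<theta>\<^sub>j\<close> is a continuous angle of the velocity of the \<open>j\<close>-th
  curve. Once around the \<open>j\<close>-th curve \<open>\<theta>\<^sub>j\<close> grows by \<open>2\<pi>\<close> times the rotation number, and
  for a smoothed grid diagram the rotation number is \<open>w(G)\<close>: every corner is a right angle at
  which the tangent turns by \<open>\<pm>\<pi>/2\<close>, and it does not turn along the edges. Hence the Maslov
  indices are exactly the numbers \<open>2 (x w(G\<^sub>z\<^sub>x) + y w(G\<^sub>w\<^sub>y))\<close>, whose least positive element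
  is \<open>2 gcd\<close> by Bezout.\<close>

lemma constant_on_if_exp_constant_on:
  fixes F :: "'a::topological_space \<Rightarrow> complex"
  assumes "connected S" and "continuous_on S F" and "(\<lambda>t. exp (F t)) constant_on S"
  shows "F constant_on S"
proof (rule continuous_discrete_range_constant[OF assms(1,2)])
  fix x assume x: "x \<in> S"
  show "\<exists>e>0. \<forall>y. y \<in> S \<and> F y \<noteq> F x \<longrightarrow> e \<le> norm (F y - F x)"
  proof (intro exI[of _ "2*pi"] conjI allI impI)
    fix y assume y: "y \<in> S \<and> F y \<noteq> F x"
    have "exp (F y - F x) = 1"
      using assms(3) x y by (auto simp: exp_diff constant_on_def)
    then obtain m :: int where "Re (F y - F x) = 0" "Im (F y - F x) = of_int (2 * m) * pi"
      unfolding exp_eq_1 by blast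
    then have "F y - F x = of_int (2 * m) * pi * \<i>"
      by (simp add: complex_eq_iff)
    moreover have "m \<noteq> 0" using calculation y by auto
    ultimately have "norm (F y - F x) = 2 * pi * \<bar>of_int m\<bar>"
      by (simp add: norm_mult abs_mult)
    also have "\<dots> \<ge> 2 * pi" using \<open>m \<noteq> 0\<close> by simp
    finally show "2*pi \<le> norm (F y - F x)" .
  qed simp
qed

lemma continuous_log_shift:
  fixes L :: "real \<Rightarrow> complex"
  assumes L: "continuous_on UNIV L" and exp_periodic: "\<And>\<theta>. exp (L (\<theta> + p)) = exp (L \<theta>)"
  shows "L (\<theta> + p) = L \<theta> + (L p - L 0)"
proof -
  have "continuous_on UNIV (\<lambda>\<theta>. L (\<theta> + p) - L \<theta>)"
    by (intro continuous_intros continuous_on_compose2[OF L]) auto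
  moreover have "exp (L (\<theta> + p) - L \<theta>) = 1" for \<theta>
    by (simp only: exp_diff exp_periodic) simp
  then have "(\<lambda>\<theta>. exp (L (\<theta> + p) - L \<theta>)) constant_on UNIV"
    by (simp add: constant_on_def)
  ultimately have "(\<lambda>\<theta>. L (\<theta> + p) - L \<theta>) constant_on UNIV"
    by (rule constant_on_if_exp_constant_on[OF connected_UNIV])
  then obtain y where y: "\<And>x. L (x + p) - L x = y" by (auto simp: constant_on_def)
  show ?thesis using y[of \<theta>] y[of 0] by (metis add_0 diff_eq_eq add.commute)
qed

lemma Im_diff_lt_pi_if_exp_in_half_plane:
  fixes L :: "'a::topological_space \<Rightarrow> complex"
  assumes S: "connected S" and L: "continuous_on S L"
    and half_plane: "\<And>t. t \<in> S \<Longrightarrow> Re (exp (L t) * W) > 0" and a: "a \<in> S" and b: "b \<in> S"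
  shows "\<bar>Im (L b - L a)\<bar> < pi"
proof -
  define E where "E t = exp (L t) * W" for t
  have E_pos: "Re (E t) > 0" if "t \<in> S" for t
    using half_plane[OF that] by (simp add: E_def)
  have "continuous_on S E" unfolding E_def by (intro continuous_intros L)
  then have "continuous_on S (\<lambda>t. Ln (E t))"
    by (rule continuous_on_Ln') (meson E_pos complex_nonpos_Reals_iff not_le)
  with L have cont: "continuous_on S (\<lambda>t. L t - Ln (E t))"
    by (rule continuous_on_diff)
  have exp_eq: "exp (L t - Ln (E t)) = 1 / W" if "t \<in> S" for t
  proof -
    have "E t \<noteq> 0" using E_pos[OF that] by auto
    have "exp (L t - Ln (E t)) = exp (L t) / exp (Ln (E t))" by (rule exp_diff)
    also have "\<dots> = exp (L t) / E t" using \<open>E t \<noteq> 0\<close> by simp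
    also have "\<dots> = 1 / W" by (simp add: E_def)
    finally show ?thesis .
  qed
  have "(\<lambda>t. exp (L t - Ln (E t))) constant_on S"
    unfolding constant_on_def using exp_eq by blast
  with cont have "(\<lambda>t. L t - Ln (E t)) constant_on S"
    by (rule constant_on_if_exp_constant_on[OF S])
  then have "L b - Ln (E b) = L a - Ln (E a)"
    using a b unfolding constant_on_def by metis
  then have "L b - L a = Ln (E b) - Ln (E a)"
    by (simp add: algebra_simps)
  moreover have "\<bar>Im (Ln (E a))\<bar> < pi/2" by (rule Re_Ln_pos_lt_imp[OF E_pos[OF a]])
  moreover have "\<bar>Im (Ln (E b))\<bar> < pi/2" by (rule Re_Ln_pos_lt_imp[OF E_pos[OF b]])
  ultimately show ?thesis by simp
qed

lemma Im_eq_pi_half_if_exp_imaginary: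
  assumes exp_z: "exp z = \<i> * of_real r" and "r \<noteq> 0" and small: "\<bar>Im z\<bar> < pi"
  shows "Im z = (if r > 0 then pi/2 else - pi/2)"
proof -
  have "cos (Im z) = 0" using arg_cong[OF exp_z, of Re] by (simp add: Re_exp)
  then obtain i :: int where "odd i" and i: "Im z = of_int i * (pi/2)"
    using cos_zero_iff_int by blast
  then have "\<bar>Im z\<bar> = \<bar>real_of_int i\<bar> * (pi/2)" unfolding i by (simp add: abs_mult)
  with small have "\<bar>real_of_int i\<bar> * (pi/2) < 2 * (pi/2)" by simp
  then have "\<bar>real_of_int i\<bar> < 2" by (rule mult_right_less_imp_less) simp
  then have "-2 < i" "i < 2" by linarith+
  with \<open>odd i\<close> have "i = 1 \<or> i = -1" by presburger
  then consider "Im z = pi/2" | "Im z = - pi/2" using i by fastforce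
  moreover have "r = exp (Re z) * sin (Im z)" using arg_cong[OF exp_z, of Im] by (simp add: Im_exp)
  ultimately show ?thesis by cases auto
qed

text \<open>The sweep stays in the open half plane around \<open>U + V\<close>, where a continuous argument changes
  by less than \<open>\<pi>\<close>; as the endpoints differ by a quarter turn modulo \<open>2\<pi>\<close>, the change is
  exactly \<open>\<pm>\<pi>/2\<close>.\<close>

lemma continuous_log_quarter_turn:
  fixes a b :: real
  assumes "a \<le> b" and L: "continuous_on {a..b} L" and "U \<noteq> 0" "V \<noteq> 0" and perp: "Re (U * cnj V) = 0"
    and cone: "\<And>t. t \<in> {a..b} \<Longrightarrow>
                 \<exists>\<alpha> \<beta>. \<alpha> \<ge> 0 \<and> \<beta> \<ge> 0 \<and> exp (L t) = of_real \<alpha> * U + of_real \<beta> * V"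
    and La: "exp (L a) = of_real c1 * U" "c1 > 0" and Lb: "exp (L b) = of_real c2 * V" "c2 > 0"
  shows "Im (L b - L a) = (if Im (V * cnj U) > 0 then pi/2 else - pi/2)"
proof -
  have perp': "Re (V * cnj U) = 0" using perp by (simp add: algebra_simps)
  have half_plane: "Re (exp (L t) * cnj (U + V)) > 0" if t: "t \<in> {a..b}" for t
  proof -
    obtain \<alpha> \<beta> where ab: "\<alpha> \<ge> 0" "\<beta> \<ge> 0" and e: "exp (L t) = of_real \<alpha> * U + of_real \<beta> * V"
      using cone[OF t] by blast
    have nonzero: "\<alpha> \<noteq> 0 \<or> \<beta> \<noteq> 0" using e by (metis add_0 exp_not_eq_zero mult_zero_left of_real_0)
    have "Re (exp (L t) * cnj (U + V)) = \<alpha> * Re (U * cnj U) + \<alpha> * Re (U * cnj V)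
        + \<beta> * Re (V * cnj U) + \<beta> * Re (V * cnj V)"
      by (simp add: e algebra_simps)
    moreover have "Re (Z * cnj Z) = (cmod Z)\<^sup>2" for Z
      by (simp flip: complex_norm_square)
    ultimately have "Re (exp (L t) * cnj (U + V)) = \<alpha> * (cmod U)\<^sup>2 + \<beta> * (cmod V)\<^sup>2"
      using perp perp' by simp
    then show ?thesis using nonzero ab \<open>U \<noteq> 0\<close> \<open>V \<noteq> 0\<close>
      by (auto simp: add_pos_nonneg add_nonneg_pos)
  qed
  have small: "\<bar>Im (L b - L a)\<bar> < pi"
    by (rule Im_diff_lt_pi_if_exp_in_half_plane[OF connected_Icc L half_plane]) (use \<open>a \<le> b\<close> in auto)
  define s where "s = Im (V * cnj U)"
  have VU: "V * cnj U = \<i> * of_real s" using perp' by (simp add: s_def complex_eq_iff)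
  then have "s \<noteq> 0" using \<open>U \<noteq> 0\<close> \<open>V \<noteq> 0\<close> by auto
  define q where "q = c2 / (c1 * (cmod U)\<^sup>2)"
  have "q > 0" using \<open>U \<noteq> 0\<close> La(2) Lb(2) by (simp add: q_def)
  define r where "r = s * q"
  have "exp (L b - L a) = exp (L b) / exp (L a)" by (rule exp_diff)
  also have "\<dots> = of_real (c2 / c1) * (V / U)"
    unfolding La Lb by simp
  also have "\<dots> = of_real (c2 / c1) * (V * cnj U / (cmod U)\<^sup>2)"
    by (simp only: complex_div_cnj[of V U])
  also have "\<dots> = \<i> * of_real r"
    by (simp add: VU r_def q_def)
  finally have "Im (L b - L a) = (if r > 0 then pi/2 else - pi/2)"
    using \<open>s \<noteq> 0\<close> \<open>q > 0\<close> small unfolding r_def by (intro Im_eq_pi_half_if_exp_imaginary) auto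
  moreover have "r > 0 \<longleftrightarrow> s > 0"
    using \<open>q > 0\<close> by (simp add: r_def zero_less_mult_iff)
  ultimately show ?thesis by (simp only: s_def)
qed

definition cpx :: "real \<times> real \<Rightarrow> complex" where
  "cpx p = Complex (fst p) (snd p)"

lemma cpx_eq_0_iff [simp]: "cpx p = 0 \<longleftrightarrow> p = 0"
  by (cases p) (simp add: cpx_def complex_eq_iff zero_prod_def)

lemma cpx_add: "cpx (p + q) = cpx p + cpx q"
  by (simp add: cpx_def complex_eq_iff)

lemma cpx_scaleR: "cpx (c *\<^sub>R p) = of_real c * cpx p"
  by (simp add: cpx_def complex_eq_iff)

lemma Re_cpx_mult_cnj: "Re (cpx p * cnj (cpx q)) = fst p * fst q + snd p * snd q"
  by (simp add: cpx_def)

lemma Im_cpx_mult_cnj: "Im (cpx q * cnj (cpx p)) = cross2 p q"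
  by (simp add: cpx_def cross2_def algebra_simps)

lemma continuous_on_cpx [continuous_intros]:
  "continuous_on S f \<Longrightarrow> continuous_on S (\<lambda>x. cpx (f x))"
  unfolding cpx_def Complex_eq by (intro continuous_intros)

lemma cross2_nonzero_if_orthogonal:
  assumes "fst u * fst v + snd u * snd v = 0" "u \<noteq> 0" "v \<noteq> 0"
  shows "cross2 u v \<noteq> 0"
proof
  assume "cross2 u v = 0"
  with assms(1) have "cpx v * cnj (cpx u) = 0"
    by (simp add: cpx_def complex_eq_iff cross2_def algebra_simps)
  with assms(2,3) show False by simp
qed

lemma immersed_grid_length: "immersed_grid n vs \<Longrightarrow> length vs = 2 * n \<and> n \<ge> 1"
  by (simp add: immersed_grid_def)

lemma dir_out_nonzero:
  assumes "immersed_grid n vs" "k < length vs"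
  shows "dir_out vs k \<noteq> 0"
proof
  assume "dir_out vs k = 0"
  then have "vs ! ((k + 1) mod length vs) = vs ! k"
    by (simp add: dir_out_def grid_pt_def prod_eq_iff)
  with assms show False by (auto simp: immersed_grid_def)
qed

lemma dir_out_even_horizontal:
  assumes "immersed_grid n vs" "k < length vs" "even k"
  shows "snd (dir_out vs k) = 0"
proof -
  obtain i where k: "k = 2 * i" using \<open>even k\<close> by blast
  with assms have "length vs = 2 * n" "i < n" by (auto simp: immersed_grid_def)
  with assms(1) show ?thesis by (auto simp: k dir_out_def grid_pt_def immersed_grid_def)
qed

lemma dir_out_odd_vertical:
  assumes "immersed_grid n vs" "k < length vs" "odd k"
  shows "fst (dir_out vs k) = 0"
proof -
  obtain i where k: "k = 2 * i + 1" using \<open>odd k\<close> oddE by blast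
  with assms have "length vs = 2 * n" "i < n" by (auto simp: immersed_grid_def)
  with assms(1) show ?thesis by (auto simp: k dir_out_def grid_pt_def immersed_grid_def)
qed

lemma dir_in_eq_dir_out_pred:
  assumes "k < length vs"
  shows "dir_in vs k = dir_out vs ((k + length vs - 1) mod length vs)"
proof -
  have "((k + length vs - 1) mod length vs + 1) mod length vs = k"
    using assms by (cases k) (auto simp: mod_Suc_eq)
  then show ?thesis by (simp add: dir_in_def dir_out_def)
qed

lemma even_mod_pred_iff:
  fixes k N :: nat
  assumes "even N" and "k < N"
  shows "even ((k + N - 1) mod N) \<longleftrightarrow> odd k"
proof (cases k)
  case 0
  obtain m where N: "N = 2 * m" using \<open>even N\<close> by blast
  with assms have "m > 0" by simp
  then have "(k + N - 1) mod N = 2 * (m - 1) + 1" using 0 by (simp add: N)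
  then show ?thesis using 0 by simp
next
  case (Suc j)
  with assms show ?thesis by simp
qed

lemma immersed_grid_corner:
  assumes ig: "immersed_grid n vs" and k: "k < length vs"
  shows "fst (dir_in vs k) * fst (dir_out vs k) + snd (dir_in vs k) * snd (dir_out vs k) = 0"
    and "dir_in vs k \<noteq> 0"
proof -
  define p where "p = (k + length vs - 1) mod length vs"
  have "even (length vs)" "length vs > 0" using immersed_grid_length[OF ig] by auto
  then have p: "p < length vs" and parity: "even p \<longleftrightarrow> odd k"
    using even_mod_pred_iff[OF _ k] by (simp_all add: p_def)
  have din: "dir_in vs k = dir_out vs p"
    using dir_in_eq_dir_out_pred[OF k] by (simp add: p_def)
  show "dir_in vs k \<noteq> 0" using din dir_out_nonzero[OF ig p] by simp
  show "fst (dir_in vs k) * fst (dir_out vs k) + snd (dir_in vs k) * snd (dir_out vs k) = 0"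
  proof (cases "even k")
    case True
    then show ?thesis using parity din dir_out_even_horizontal[OF ig k] dir_out_odd_vertical[OF ig p] by simp
  next
    case False
    then show ?thesis using parity din dir_out_odd_vertical[OF ig k] dir_out_even_horizontal[OF ig p] by simp
  qed
qed

lemma grid_param_on_segment:
  assumes N: "length vs = N" "N > 0"
    and seg: "of_int j * (2*pi/N) \<le> \<theta>" "\<theta> < of_int (j + 1) * (2*pi/N)"
  shows "grid_param vs \<theta> = grid_pt vs (nat (j mod int N)) + (\<theta> / (2*pi/N) - of_int j) *\<^sub>R
           (grid_pt vs ((nat (j mod int N) + 1) mod N) - grid_pt vs (nat (j mod int N)))"
proof -
  define h where "h = 2*pi/N"
  have "h > 0" using N by (simp add: h_def)
  with seg have "\<lfloor>\<theta> / h\<rfloor> = j"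
    unfolding h_def[symmetric] by (simp add: floor_eq_iff pos_le_divide_eq pos_divide_less_eq)
  then show ?thesis
    unfolding grid_param_def Let_def N(1) h_def by (simp add: algebra_simps)
qed

lemma grid_param_after_corner:
  assumes k: "k < length vs" and h: "h = 2*pi / length vs"
    and "real k * h \<le> \<theta>" "\<theta> < (real k + 1) * h"
  shows "grid_param vs \<theta> = grid_pt vs k + (\<theta> / h - real k) *\<^sub>R dir_out vs k"
proof -
  have "length vs > 0" using k by linarith
  moreover have "nat (int k mod int (length vs)) = k" using k by (simp flip: of_nat_mod)
  ultimately show ?thesis
    using grid_param_on_segment[OF refl \<open>length vs > 0\<close>, of "int k" \<theta>] assms(3,4)
    by (simp add: h dir_out_def)
qed

lemma grid_param_before_corner:
  assumes k: "k < length vs" and h: "h = 2*pi / length vs"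
    and "(real k - 1) * h \<le> \<theta>" "\<theta> < real k * h"
  shows "grid_param vs \<theta> =
           grid_pt vs ((k + length vs - 1) mod length vs) + (\<theta> / h - (real k - 1)) *\<^sub>R dir_in vs k"
proof -
  have "nat ((int k - 1) mod int (length vs)) = (k + length vs - 1) mod length vs"
    using k by (cases k) (auto simp: zmod_minus1 nat_diff_distrib nat_mod_distrib)
  moreover have "length vs > 0" using k by linarith
  ultimately show ?thesis
    using grid_param_on_segment[OF refl \<open>length vs > 0\<close>, of "int k - 1" \<theta>] assms(3,4)
    by (simp add: h dir_in_eq_dir_out_pred[OF k] dir_out_def)
qed

lemma vector_derivative_on_affine_piece:
  fixes g :: "real \<Rightarrow> 'a::real_normed_vector"
  assumes "c < d" and t: "t \<in> {c..d}" and deriv: "(g has_vector_derivative D) (at t)"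
    and affine: "\<And>s. s \<in> {c..d} \<Longrightarrow> g s = P + (s / h - e) *\<^sub>R Q"
  shows "D = (1/h) *\<^sub>R Q"
proof -
  have t': "t \<in> cbox c d" using t by simp
  have "((\<lambda>s. s *\<^sub>R ((1/h) *\<^sub>R Q)) has_vector_derivative (1/h) *\<^sub>R Q) (at t within cbox c d)"
    unfolding has_vector_derivative_def
    by (rule bounded_linear_imp_has_derivative[OF bounded_linear_scaleR_left])
  from has_vector_derivative_add[OF has_vector_derivative_const this]
  have "((\<lambda>s. (P - e *\<^sub>R Q) + s *\<^sub>R ((1/h) *\<^sub>R Q)) has_vector_derivative (1/h) *\<^sub>R Q) (at t within cbox c d)"
    by simp
  then have "(g has_vector_derivative (1/h) *\<^sub>R Q) (at t within cbox c d)"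
    by (rule has_vector_derivative_transform[OF t', rotated])
       (simp add: affine algebra_simps divide_inverse)
  moreover have "(g has_vector_derivative D) (at t within cbox c d)"
    using deriv by (rule has_vector_derivative_at_within)
  ultimately show ?thesis
    using vector_derivative_unique_within_closed_interval[OF \<open>c < d\<close> t'] by metis
qed

lemma periodic_vector_derivative:
  assumes periodic: "\<And>\<theta>. g (\<theta> + p) = g \<theta>" and deriv: "\<And>\<theta>. (g has_vector_derivative g' \<theta>) (at \<theta>)"
  shows "g' (\<theta> + p) = g' \<theta>"
proof -
  have "((\<lambda>t. t + p) has_real_derivative 1) (at \<theta>)"
    by (auto intro!: derivative_eq_intros)
  then have "((\<lambda>t. g (t + p)) has_vector_derivative g' (\<theta> + p)) (at \<theta>)"
    using vector_diff_chain_at[of "\<lambda>t. t + p" 1 \<theta> g "g' (\<theta> + p)"] deriv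
    by (simp add: o_def has_real_derivative_iff_has_vector_derivative)
  with periodic deriv show ?thesis
    by (metis (no_types) ext vector_derivative_unique_at)
qed

lemma smoothing_near_corner:
  assumes sm: "smoothing vs g" and deriv: "\<And>\<theta>. (g has_vector_derivative g' \<theta>) (at \<theta>)"
    and N: "length vs > 0" and h: "h = 2*pi / length vs"
  obtains \<epsilon> where "0 < \<epsilon>" "\<epsilon> < h/2"
    "\<And>k \<theta>. k < length vs \<Longrightarrow> \<epsilon> \<le> \<bar>\<theta> - real k * h\<bar> \<Longrightarrow> \<bar>\<theta> - real k * h\<bar> \<le> h/2 \<Longrightarrow>
       g \<theta> = grid_param vs \<theta>"
    "\<And>k \<theta>. k < length vs \<Longrightarrow> \<bar>\<theta> - real k * h\<bar> < \<epsilon> \<Longrightarrow>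
       \<exists>\<alpha> \<beta>. \<alpha> \<ge> 0 \<and> \<beta> \<ge> 0 \<and> g' \<theta> = \<alpha> *\<^sub>R dir_in vs k + \<beta> *\<^sub>R dir_out vs k"
proof -
  let ?N = "length vs"
  from sm obtain \<epsilon> g'' where "0 < \<epsilon>" "\<epsilon> < pi / ?N"
    and deriv': "\<And>\<theta>. (g has_vector_derivative g'' \<theta>) (at \<theta>)"
    and far: "\<And>\<theta>. (\<forall>k < ?N. \<forall>m::int. \<bar>\<theta> - 2*pi*real k / ?N - 2*pi*real_of_int m\<bar> \<ge> \<epsilon>)
                 \<Longrightarrow> g \<theta> = grid_param vs \<theta>"
    and window: "\<And>\<theta> k m. k < ?N \<Longrightarrow> \<bar>\<theta> - 2*pi*real k / ?N - 2*pi*real_of_int m\<bar> < \<epsilon> \<Longrightarrow>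
        \<exists>\<alpha> \<beta>. \<alpha> \<ge> 0 \<and> \<beta> \<ge> 0 \<and> g'' \<theta> = \<alpha> *\<^sub>R dir_in vs k + \<beta> *\<^sub>R dir_out vs k"
    unfolding smoothing_def Let_def by blast
  have "h > 0" "\<epsilon> < h/2" using N \<open>\<epsilon> < pi / ?N\<close> by (simp_all add: h)
  have corner_param: "2*pi*real k / ?N + 2*pi*real_of_int m = of_int (int k + m * int ?N) * h" for k m
    using N by (simp add: h field_simps)
  show thesis
  proof
    show "0 < \<epsilon>" "\<epsilon> < h/2" by fact+
  next
    fix k \<theta> assume k: "k < ?N" and outside: "\<epsilon> \<le> \<bar>\<theta> - real k * h\<bar>" and near: "\<bar>\<theta> - real k * h\<bar> \<le> h/2"
    have "\<epsilon> \<le> \<bar>\<theta> - of_int j * h\<bar>" for j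
    proof (cases "j = int k")
      case False
      then have "1 \<le> \<bar>of_int j - real k\<bar>" by linarith
      then have "h \<le> \<bar>of_int j * h - real k * h\<bar>"
        using \<open>h > 0\<close> by (simp add: left_diff_distrib[symmetric] abs_mult)
      then show ?thesis using near \<open>\<epsilon> < h/2\<close> by arith
    qed (use outside in simp)
    then show "g \<theta> = grid_param vs \<theta>"
      by (intro far allI impI) (simp only: diff_diff_eq corner_param)
  next
    fix k \<theta> assume k: "k < ?N" and "\<bar>\<theta> - real k * h\<bar> < \<epsilon>"
    then have "\<exists>\<alpha> \<beta>. \<alpha> \<ge> 0 \<and> \<beta> \<ge> 0 \<and> g'' \<theta> = \<alpha> *\<^sub>R dir_in vs k + \<beta> *\<^sub>R dir_out vs k"
      using window[of k \<theta> 0] corner_param[of k 0] by simp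
    then show "\<exists>\<alpha> \<beta>. \<alpha> \<ge> 0 \<and> \<beta> \<ge> 0 \<and> g' \<theta> = \<alpha> *\<^sub>R dir_in vs k + \<beta> *\<^sub>R dir_out vs k"
      using vector_derivative_unique_at[OF deriv deriv'] by metis
  qed
qed

lemma smoothing_velocity_near_corner:
  assumes ig: "immersed_grid n vs" and sm: "smoothing vs g"
    and deriv: "\<And>\<theta>. (g has_vector_derivative g' \<theta>) (at \<theta>)"
    and k: "k < length vs" and h: "h = 2*pi / length vs"
  shows "g' ((real k - 1/2) * h) = (1/h) *\<^sub>R dir_in vs k"
    and "g' ((real k + 1/2) * h) = (1/h) *\<^sub>R dir_out vs k"
    and "\<And>\<theta>. \<theta> \<in> {(real k - 1/2) * h .. (real k + 1/2) * h} \<Longrightarrow>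
           \<exists>\<alpha> \<beta>. \<alpha> \<ge> 0 \<and> \<beta> \<ge> 0 \<and> g' \<theta> = \<alpha> *\<^sub>R dir_in vs k + \<beta> *\<^sub>R dir_out vs k"
proof -
  have N: "length vs > 0" using k by linarith
  then have "h > 0" by (simp add: h)
  obtain \<epsilon> where "0 < \<epsilon>" "\<epsilon> < h/2"
    and on_grid: "\<And>\<theta>. \<epsilon> \<le> \<bar>\<theta> - real k * h\<bar> \<Longrightarrow> \<bar>\<theta> - real k * h\<bar> \<le> h/2 \<Longrightarrow> g \<theta> = grid_param vs \<theta>"
    and window: "\<And>\<theta>. \<bar>\<theta> - real k * h\<bar> < \<epsilon> \<Longrightarrow>
       \<exists>\<alpha> \<beta>. \<alpha> \<ge> 0 \<and> \<beta> \<ge> 0 \<and> g' \<theta> = \<alpha> *\<^sub>R dir_in vs k + \<beta> *\<^sub>R dir_out vs k"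
    using smoothing_near_corner[OF sm deriv N h] k by metis
  define a b where "a = (real k - 1/2) * h" and "b = (real k + 1/2) * h"
  have before: "g' \<theta> = (1/h) *\<^sub>R dir_in vs k" if "\<theta> \<in> {a .. real k * h - \<epsilon>}" for \<theta>
  proof (rule vector_derivative_on_affine_piece[OF _ that deriv])
    fix s assume "s \<in> {a .. real k * h - \<epsilon>}"
    then show "g s = grid_pt vs ((k + length vs - 1) mod length vs) + (s / h - (real k - 1)) *\<^sub>R dir_in vs k"
      using \<open>0 < \<epsilon>\<close> \<open>\<epsilon> < h/2\<close>
      by (auto simp: a_def algebra_simps on_grid grid_param_before_corner[OF k h])
  qed (use \<open>\<epsilon> < h/2\<close> in \<open>simp add: a_def algebra_simps\<close>)
  have after: "g' \<theta> = (1/h) *\<^sub>R dir_out vs k" if "\<theta> \<in> {real k * h + \<epsilon> .. b}" for \<theta>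
  proof (rule vector_derivative_on_affine_piece[OF _ that deriv])
    fix s assume "s \<in> {real k * h + \<epsilon> .. b}"
    then show "g s = grid_pt vs k + (s / h - real k) *\<^sub>R dir_out vs k"
      using \<open>0 < \<epsilon>\<close> \<open>\<epsilon> < h/2\<close>
      by (auto simp: b_def algebra_simps on_grid grid_param_after_corner[OF k h])
  qed (use \<open>\<epsilon> < h/2\<close> in \<open>simp add: b_def algebra_simps\<close>)
  show "g' a = (1/h) *\<^sub>R dir_in vs k" "g' b = (1/h) *\<^sub>R dir_out vs k"
    using \<open>\<epsilon> < h/2\<close> by (auto intro!: before after simp: a_def b_def algebra_simps)
  fix \<theta> assume "\<theta> \<in> {a..b}"
  then consider "\<theta> \<in> {a .. real k * h - \<epsilon>}" | "\<bar>\<theta> - real k * h\<bar> < \<epsilon>" | "\<theta> \<in> {real k * h + \<epsilon> .. b}"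
    by fastforce
  then show "\<exists>\<alpha> \<beta>. \<alpha> \<ge> 0 \<and> \<beta> \<ge> 0 \<and> g' \<theta> = \<alpha> *\<^sub>R dir_in vs k + \<beta> *\<^sub>R dir_out vs k"
  proof cases
    case 1 then show ?thesis using before[OF 1] \<open>h > 0\<close> by (intro exI[of _ "1/h"] exI[of _ 0]) simp
  next
    case 2 then show ?thesis by (rule window)
  next
    case 3 then show ?thesis using after[OF 3] \<open>h > 0\<close> by (intro exI[of _ 0] exI[of _ "1/h"]) simp
  qed
qed

lemma smoothing_corner_turn:
  assumes ig: "immersed_grid n vs" and sm: "smoothing vs g"
    and deriv: "\<And>\<theta>. (g has_vector_derivative g' \<theta>) (at \<theta>)"
    and L: "continuous_on UNIV L" and log: "\<And>\<theta>. cpx (g' \<theta>) = exp (L \<theta>)"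
    and k: "k < length vs" and h: "h = 2*pi / length vs"
  shows "Im (L ((real k + 1/2) * h) - L ((real k - 1/2) * h)) =
           (if cross2 (dir_in vs k) (dir_out vs k) > 0 then pi/2 else - pi/2)"
proof -
  note velocity = smoothing_velocity_near_corner[OF ig sm deriv k h]
  have "length vs > 0" using k by linarith
  then have "h > 0" by (simp add: h)
  have "Im (L ((real k + 1/2) * h) - L ((real k - 1/2) * h)) =
      (if Im (cpx (dir_out vs k) * cnj (cpx (dir_in vs k))) > 0 then pi/2 else - pi/2)"
  proof (rule continuous_log_quarter_turn[OF _ continuous_on_subset[OF L subset_UNIV]])
    show "(real k - 1/2) * h \<le> (real k + 1/2) * h" using \<open>h > 0\<close> by simp
    show "cpx (dir_in vs k) \<noteq> 0" "cpx (dir_out vs k) \<noteq> 0"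
      using immersed_grid_corner[OF ig k] dir_out_nonzero[OF ig k] by simp_all
    show "Re (cpx (dir_in vs k) * cnj (cpx (dir_out vs k))) = 0"
      unfolding Re_cpx_mult_cnj by (rule immersed_grid_corner[OF ig k])
    show "exp (L ((real k - 1/2) * h)) = of_real (1/h) * cpx (dir_in vs k)"
      "exp (L ((real k + 1/2) * h)) = of_real (1/h) * cpx (dir_out vs k)"
      by (simp_all flip: log add: velocity cpx_scaleR)
    show "1/h > 0" "1/h > 0" using \<open>h > 0\<close> by simp_all
    fix t assume "t \<in> {(real k - 1/2) * h .. (real k + 1/2) * h}"
    then obtain \<alpha> \<beta> where "\<alpha> \<ge> 0" "\<beta> \<ge> 0" "g' t = \<alpha> *\<^sub>R dir_in vs k + \<beta> *\<^sub>R dir_out vs k"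
      using velocity(3) by blast
    then show "\<exists>\<alpha> \<beta>. \<alpha> \<ge> 0 \<and> \<beta> \<ge> 0 \<and>
        exp (L t) = of_real \<alpha> * cpx (dir_in vs k) + of_real \<beta> * cpx (dir_out vs k)"
      by (metis log cpx_add cpx_scaleR)
  qed
  then show ?thesis by (simp only: Im_cpx_mult_cnj)
qed

lemma sum_corner_turns:
  assumes ig: "immersed_grid n vs"
  shows "(\<Sum>k<length vs. if cross2 (dir_in vs k) (dir_out vs k) > 0 then pi/2 else - pi/2)
           = 2 * pi * grid_w vs"
proof -
  let ?cr = "\<lambda>k. cross2 (dir_in vs k) (dir_out vs k)"
  have "?cr k \<noteq> 0" if "k < length vs" for k
    using immersed_grid_corner[OF ig that] dir_out_nonzero[OF ig that] by (intro cross2_nonzero_if_orthogonal)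
  then have cw: "{..<length vs} \<inter> - {k. ?cr k > 0} = {k. k < length vs \<and> ?cr k < 0}"
    by (force simp: linorder_neq_iff)
  have "(\<Sum>k<length vs. if ?cr k > 0 then pi/2 else - pi/2)
      = (\<Sum>k\<in>{..<length vs} \<inter> {k. ?cr k > 0}. pi/2) + (\<Sum>k\<in>{..<length vs} \<inter> - {k. ?cr k > 0}. - pi/2)"
    by (rule sum.If_cases) simp
  also have "\<dots> = real (ccw_corners vs) * (pi/2) - real (cw_corners vs) * (pi/2)"
    unfolding cw by (simp add: ccw_corners_def cw_corners_def Int_def conj_commute)
  finally show ?thesis by (simp add: grid_w_def algebra_simps)
qed

lemma smoothing_total_turn:
  assumes ig: "immersed_grid n vs" and sm: "smoothing vs g"
    and deriv: "\<And>\<theta>. (g has_vector_derivative g' \<theta>) (at \<theta>)"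
    and L: "continuous_on UNIV L" and log: "\<And>\<theta>. cpx (g' \<theta>) = exp (L \<theta>)"
    and shift: "\<And>\<theta>. L (\<theta> + 2*pi) = L \<theta> + c"
  shows "Im c = 2 * pi * grid_w vs"
proof -
  let ?N = "length vs"
  define h where "h = 2*pi / ?N"
  have "?N > 0" using immersed_grid_length[OF ig] by simp
  then have Nh: "real ?N * h = 2*pi" by (simp add: h_def)
  define f where "f i = L ((real i - 1/2) * h)" for i :: nat
  have "f ?N = f 0 + c" using shift[of "-h/2"] Nh by (simp add: f_def algebra_simps)
  then have "Im c = (\<Sum>k<?N. Im (f (Suc k) - f k))"
    by (simp add: sum_lessThan_telescope[of "\<lambda>i. Im (f i)"])
  also have "\<dots> = (\<Sum>k<?N. if cross2 (dir_in vs k) (dir_out vs k) > 0 then pi/2 else - pi/2)"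
  proof (rule sum.cong)
    fix k assume "k \<in> {..<?N}"
    then have k: "k < ?N" by simp
    have Suc_k: "real (Suc k) - 1/2 = real k + 1/2" by simp
    show "Im (f (Suc k) - f k) =
        (if cross2 (dir_in vs k) (dir_out vs k) > 0 then pi/2 else - pi/2)"
      unfolding f_def Suc_k by (rule smoothing_corner_turn[OF ig sm deriv L log k h_def])
  qed simp
  also have "\<dots> = 2 * pi * grid_w vs" by (rule sum_corner_turns[OF ig])
  finally show ?thesis .
qed

definition log_velocity :: "(real \<Rightarrow> real \<times> real) \<Rightarrow> (real \<Rightarrow> complex) \<Rightarrow> bool" where
  "log_velocity g L \<longleftrightarrow> continuous_on UNIV L \<and>
     (\<forall>\<theta>. (g has_vector_derivative (Re (exp (L \<theta>)), Im (exp (L \<theta>)))) (at \<theta>))"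

lemma smoothing_log_velocity:
  assumes ig: "immersed_grid n vs" and sm: "smoothing vs g"
  obtains L r where "log_velocity g L" "real_of_int r = grid_w vs"
    "\<And>\<theta>. L (\<theta> + 2*pi) = L \<theta> + 2 * pi * \<i> * of_int r"
proof -
  from sm obtain g' where deriv: "\<And>\<theta>. (g has_vector_derivative g' \<theta>) (at \<theta>)"
    and "continuous_on UNIV g'" "\<And>\<theta>. g' \<theta> \<noteq> 0" and periodic: "\<And>\<theta>. g (\<theta> + 2*pi) = g \<theta>"
    unfolding smoothing_def Let_def by blast
  then obtain L where L: "continuous_on UNIV L" and log: "\<And>\<theta>. cpx (g' \<theta>) = exp (L \<theta>)"
    using continuous_logarithm_on_contractible[of UNIV "\<lambda>\<theta>. cpx (g' \<theta>)"]
    by (metis continuous_on_cpx contractible_UNIV cpx_eq_0_iff UNIV_I)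
  have exp_periodic: "exp (L (\<theta> + 2*pi)) = exp (L \<theta>)" for \<theta>
    by (metis log periodic_vector_derivative[OF periodic deriv])
  define c where "c = L (2*pi) - L 0"
  have shift: "L (\<theta> + 2*pi) = L \<theta> + c" for \<theta>
    unfolding c_def using L exp_periodic by (rule continuous_log_shift)
  have "exp c = 1" using exp_periodic[of 0] shift[of 0] by (simp add: exp_add)
  then obtain r :: int where "Re c = 0" and Im_c: "Im c = of_int (2 * r) * pi"
    unfolding exp_eq_1 by blast
  have "real_of_int r = grid_w vs"
    using Im_c smoothing_total_turn[OF ig sm deriv L log shift] by simp
  moreover have "c = 2 * pi * \<i> * of_int r"
    using \<open>Re c = 0\<close> Im_c by (simp add: complex_eq_iff)
  moreover have "g' \<theta> = (Re (exp (L \<theta>)), Im (exp (L \<theta>)))" for \<theta>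
    by (simp flip: log add: cpx_def)
  ultimately show thesis
    using that[of L r] L deriv shift by (simp add: log_velocity_def)
qed

lemma has_derivative_comp_fst:
  assumes "(g has_vector_derivative d) (at (fst p))"
  shows "((\<lambda>q. g (fst q)) has_derivative (\<lambda>q. fst q *\<^sub>R d)) (at p)"
  using diff_chain_at[OF has_derivative_fst[OF has_derivative_ident, of "at p"], of g "\<lambda>t. t *\<^sub>R d"] assms
  unfolding has_vector_derivative_def by (simp add: o_def)

lemma has_derivative_comp_snd:
  assumes "(g has_vector_derivative d) (at (snd p))"
  shows "((\<lambda>q. g (snd q)) has_derivative (\<lambda>q. snd q *\<^sub>R d)) (at p)"
  using diff_chain_at[OF has_derivative_snd[OF has_derivative_ident, of "at p"], of g "\<lambda>t. t *\<^sub>R d"] assms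
  unfolding has_vector_derivative_def by (simp add: o_def)

lemma torus_map_has_derivative:
  assumes "(g1 has_vector_derivative d1) (at s)" and "(g2 has_vector_derivative d2) (at u)"
  shows "(torus_map g1 g2 has_derivative
           (\<lambda>q. (snd q * fst d2, fst q * snd d1, snd q * snd d2, fst q * fst d1))) (at (s, u))"
proof -
  have g1: "((\<lambda>q. g1 (fst q)) has_derivative (\<lambda>q. fst q *\<^sub>R d1)) (at (s, u))"
    and g2: "((\<lambda>q. g2 (snd q)) has_derivative (\<lambda>q. snd q *\<^sub>R d2)) (at (s, u))"
    using assms by (auto intro!: has_derivative_comp_fst has_derivative_comp_snd)
  have "((\<lambda>q. (fst (g2 (snd q)), snd (g1 (fst q)), snd (g2 (snd q)), fst (g1 (fst q)))) has_derivative
         (\<lambda>q. (fst (snd q *\<^sub>R d2), snd (fst q *\<^sub>R d1), snd (snd q *\<^sub>R d2), fst (fst q *\<^sub>R d1)))) (at (s, u))"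
    by (intro has_derivative_Pair has_derivative_fst[OF g2] has_derivative_snd[OF g2]
          has_derivative_fst[OF g1] has_derivative_snd[OF g1])
  moreover have "torus_map g1 g2 = (\<lambda>q. (fst (g2 (snd q)), snd (g1 (fst q)), snd (g2 (snd q)), fst (g1 (fst q))))"
    by (auto simp: torus_map_def)
  ultimately show ?thesis by simp
qed

lemma cdet_bilinear:
  "cdet (p *\<^sub>R a + q *\<^sub>R b) (r *\<^sub>R a + t *\<^sub>R b) = of_real (p * t - q * r) * cdet a b"
  by (cases a, cases b) (simp add: cdet_def complex_eq_iff algebra_simps)

text \<open>\<open>det_sq\<close> is defined by a choice over bases; it is well defined because a change of real
  basis multiplies \<open>cdet\<close> by a real factor, which cancels in \<open>cdet\<^sup>2 / |cdet|\<^sup>2\<close>.\<close>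

lemma det_sq_span:
  assumes V: "V = range (\<lambda>q. fst q *\<^sub>R a + snd q *\<^sub>R b)" and nz: "cdet a b \<noteq> 0"
  shows "det_sq V = (cdet a b)\<^sup>2 / of_real ((cmod (cdet a b))\<^sup>2)"
proof -
  let ?P = "\<lambda>d. \<exists>a' b'. a' \<in> V \<and> b' \<in> V \<and> span {a', b'} = V \<and> cdet a' b' \<noteq> 0 \<and>
                    d = (cdet a' b')\<^sup>2 / complex_of_real ((cmod (cdet a' b'))\<^sup>2)"
  have "a \<in> V" unfolding V by (rule range_eqI[of _ _ "(1,0)"]) simp
  moreover have "b \<in> V" unfolding V by (rule range_eqI[of _ _ "(0,1)"]) simp
  moreover have "span {a, b} = V"
  proof (intro equalityI subsetI)
    fix x assume "x \<in> span {a, b}"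
    then obtain k l where "x - k *\<^sub>R a = l *\<^sub>R b" by (auto simp: span_insert span_singleton)
    then have "x = fst (k, l) *\<^sub>R a + snd (k, l) *\<^sub>R b" by (simp add: algebra_simps)
    then show "x \<in> V" unfolding V by blast
  next
    fix x assume "x \<in> V"
    then obtain q where x: "x = fst q *\<^sub>R a + snd q *\<^sub>R b" unfolding V by blast
    have "x - fst q *\<^sub>R a \<in> span {b}" unfolding x by (auto simp: span_singleton)
    then show "x \<in> span {a, b}" by (auto simp: span_insert)
  qed
  ultimately have "?P ((cdet a b)\<^sup>2 / of_real ((cmod (cdet a b))\<^sup>2))" using nz by blast
  moreover have "d = (cdet a b)\<^sup>2 / of_real ((cmod (cdet a b))\<^sup>2)" if "?P d" for d
  proof -
    from that obtain a' b' where "a' \<in> V" "b' \<in> V" "cdet a' b' \<noteq> 0"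
      and d: "d = (cdet a' b')\<^sup>2 / complex_of_real ((cmod (cdet a' b'))\<^sup>2)" by blast
    then obtain p q r t where "a' = p *\<^sub>R a + q *\<^sub>R b" "b' = r *\<^sub>R a + t *\<^sub>R b" unfolding V by auto
    then have cd: "cdet a' b' = of_real (p * t - q * r) * cdet a b" by (simp add: cdet_bilinear)
    define c where "c = p * t - q * r"
    have "c \<noteq> 0" using cd \<open>cdet a' b' \<noteq> 0\<close> unfolding c_def by (metis mult_zero_left of_real_0)
    have "cdet a' b' = of_real c * cdet a b" using cd by (simp only: c_def)
    then have "d = (of_real c)\<^sup>2 * (cdet a b)\<^sup>2 / ((of_real c)\<^sup>2 * of_real ((cmod (cdet a b))\<^sup>2))"
      by (simp add: d norm_mult power_mult_distrib)
    also have "\<dots> = (cdet a b)\<^sup>2 / of_real ((cmod (cdet a b))\<^sup>2)"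
      by (rule mult_divide_mult_cancel_left) (use \<open>c \<noteq> 0\<close> in simp)
    finally show ?thesis .
  qed
  ultimately show ?thesis unfolding det_sq_def by (rule some_equality)
qed

lemma exp_sq_div_norm_sq: "(exp w)\<^sup>2 / of_real ((cmod (exp w))\<^sup>2) = exp (2 * \<i> * of_real (Im w))"
proof -
  have "(exp w)\<^sup>2 = exp (2 * w)"
    by (simp only: power2_eq_square exp_add[symmetric] mult_2)
  moreover have "(cmod (exp w))\<^sup>2 = exp (2 * Re w)"
    by (simp only: norm_exp_eq_Re power2_eq_square exp_add[symmetric] mult_2)
  then have "complex_of_real ((cmod (exp w))\<^sup>2) = exp (of_real (2 * Re w))"
    by (simp only: exp_of_real)
  moreover have "2 * w - of_real (2 * Re w) = 2 * \<i> * of_real (Im w)" by (simp add: complex_eq_iff)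
  ultimately show ?thesis by (simp only: exp_diff[symmetric])
qed

lemma det_sq_tangent_plane_torus:
  assumes "log_velocity g1 L1" and "log_velocity g2 L2"
  shows "det_sq (tangent_plane (torus_map g1 g2) p) = exp (2 * \<i> * of_real (Im (L1 (fst p)) + Im (L2 (snd p))))"
proof -
  obtain s u where p: "p = (s, u)" by (cases p)
  define E1 E2 where "E1 = exp (L1 s)" and "E2 = exp (L2 u)"
  define a b where "a = (0::real, Im E1, 0::real, Re E1)" and "b = (Re E2, 0::real, Im E2, 0::real)"
  have "(torus_map g1 g2 has_derivative (\<lambda>q. fst q *\<^sub>R a + snd q *\<^sub>R b)) (at p)"
    using torus_map_has_derivative[of g1 "(Re E1, Im E1)" s g2 "(Re E2, Im E2)" u] assms
    by (simp add: log_velocity_def p a_def b_def E1_def E2_def)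
  then have "tangent_plane (torus_map g1 g2) p = range (\<lambda>q. fst q *\<^sub>R a + snd q *\<^sub>R b)"
    unfolding tangent_plane_def by (simp add: frechet_derivative_at[symmetric])
  moreover have cd: "cdet a b = - exp (L1 s + L2 u)"
    by (simp add: cdet_def a_def b_def E1_def E2_def exp_add complex_eq_iff algebra_simps)
  ultimately have "det_sq (tangent_plane (torus_map g1 g2) p) =
      (exp (L1 s + L2 u))\<^sup>2 / of_real ((cmod (exp (L1 s + L2 u)))\<^sup>2)"
    by (simp add: det_sq_span)
  also have "\<dots> = exp (2 * \<i> * of_real (Im (L1 s + L2 u)))"
    by (rule exp_sq_div_norm_sq)
  finally show ?thesis by (simp add: p)
qed

lemma shift_by_int_multiple:
  fixes f :: "real \<Rightarrow> 'a::ring_1"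
  assumes shift: "\<And>x. f (x + p) = f x + c"
  shows "f (x + of_int m * p) = f x + of_int m * c"
proof (induction m rule: int_induct[where k = 0])
  case (step1 i)
  then show ?case using shift[of "x + of_int i * p"] by (simp add: algebra_simps)
next
  case (step2 i)
  then show ?case using shift[of "x + of_int (i - 1) * p"] by (simp add: algebra_simps)
qed simp

lemma maslov_index_torus_loop:
  assumes lv: "log_velocity g1 L1" "log_velocity g2 L2"
    and shift1: "\<And>\<theta>. L1 (\<theta> + 2*pi) = L1 \<theta> + 2 * pi * \<i> * of_int r1"
    and shift2: "\<And>\<theta>. L2 (\<theta> + 2*pi) = L2 \<theta> + 2 * pi * \<i> * of_int r2"
    and q: "continuous_on {0..1} q" "q 1 = q 0 + (2*pi*real_of_int m1, 2*pi*real_of_int m2)"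
  shows "maslov_index g1 g2 q = of_int (2 * (m1 * r1 + m2 * r2))"
proof -
  define P where "P t = 2 * \<i> * of_real (Im (L1 (fst (q t))) + Im (L2 (snd (q t))))" for t
  have L1: "continuous_on UNIV L1" and L2: "continuous_on UNIV L2"
    using lv by (simp_all only: log_velocity_def)
  have "continuous_on {0..1} (\<lambda>t. L1 (fst (q t)))"
    by (rule continuous_on_compose2[OF L1]) (auto intro: continuous_on_fst q(1))
  moreover have "continuous_on {0..1} (\<lambda>t. L2 (snd (q t)))"
    by (rule continuous_on_compose2[OF L2]) (auto intro: continuous_on_snd q(1))
  ultimately have "path P"
    unfolding path_def P_def
    by (intro continuous_on_mult continuous_on_const continuous_on_of_real continuous_on_add continuous_on_Im)
  have "Im (L1 (fst (q 1))) = Im (L1 (fst (q 0))) + 2*pi*real_of_int (m1 * r1)"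
    using shift_by_int_multiple[of L1 "2*pi", OF shift1, of "fst (q 0)" m1] q(2)
    by (simp add: algebra_simps)
  moreover have "Im (L2 (snd (q 1))) = Im (L2 (snd (q 0))) + 2*pi*real_of_int (m2 * r2)"
    using shift_by_int_multiple[of L2 "2*pi", OF shift2, of "snd (q 0)" m2] q(2)
    by (simp add: algebra_simps)
  ultimately have "P 1 - P 0 = 2 * pi * \<i> * of_int (2 * (m1 * r1 + m2 * r2))"
    by (simp add: P_def algebra_simps)
  moreover have "maslov_index g1 g2 q = winding_number (exp \<circ> P) 0"
    unfolding maslov_index_def by (simp add: o_def P_def det_sq_tangent_plane_torus[OF lv])
  ultimately show ?thesis
    using winding_number_compose_exp[OF \<open>path P\<close>] by (simp add: pathfinish_def pathstart_def)
qed

lemma maslov_indices_eq: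
  assumes "log_velocity g1 L1" "log_velocity g2 L2"
    and "\<And>\<theta>. L1 (\<theta> + 2*pi) = L1 \<theta> + 2 * pi * \<i> * of_int r1"
    and "\<And>\<theta>. L2 (\<theta> + 2*pi) = L2 \<theta> + 2 * pi * \<i> * of_int r2"
  shows "maslov_indices g1 g2 = {m. \<exists>x y. m = 2 * (x * r1 + y * r2)}"
proof (intro set_eqI iffI)
  fix m assume "m \<in> maslov_indices g1 g2"
  then obtain q m1 m2 where "continuous_on {0..1} q" "q 1 = q 0 + (2*pi*real_of_int m1, 2*pi*real_of_int m2)"
    and "maslov_index g1 g2 q = of_int m"
    by (auto simp: maslov_indices_def torus_loop_def)
  then have "m = 2 * (m1 * r1 + m2 * r2)"
    using maslov_index_torus_loop[OF assms] by (metis of_int_eq_iff)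
  then show "m \<in> {m. \<exists>x y. m = 2 * (x * r1 + y * r2)}" by blast
next
  fix m assume "m \<in> {m. \<exists>x y. m = 2 * (x * r1 + y * r2)}"
  then obtain x y where m: "m = 2 * (x * r1 + y * r2)" by blast
  define q where "q t = (2*pi*real_of_int x * t, 2*pi*real_of_int y * t)" for t :: real
  have q: "continuous_on {0..1} q" "q 1 = q 0 + (2*pi*real_of_int x, 2*pi*real_of_int y)"
    unfolding q_def by (auto intro!: continuous_intros)
  then have "torus_loop q" unfolding torus_loop_def by blast
  moreover have "maslov_index g1 g2 q = of_int m"
    using maslov_index_torus_loop[OF assms q] m by simp
  ultimately show "m \<in> maslov_indices g1 g2" unfolding maslov_indices_def by blast
qed

lemma least_positive_even_combination:
  fixes a b :: int
  assumes M: "M = {m. \<exists>x y. m = 2 * (x * a + y * b)}"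
  shows "(if \<forall>m \<in> M. m = 0 then 0 else (LEAST m. m > 0 \<and> m \<in> M)) = 2 * gcd a b"
proof (cases "a = 0 \<and> b = 0")
  case False
  have in_M: "2 * (x * a + y * b) \<in> M" for x y unfolding M by blast
  have "2 * a \<in> M" "2 * b \<in> M" using in_M[of 1 0] in_M[of 0 1] by simp_all
  with False have "\<not> (\<forall>m \<in> M. m = 0)" by (metis mult_eq_0_iff zero_neq_numeral)
  moreover have "(LEAST m. m > 0 \<and> m \<in> M) = 2 * gcd a b"
  proof (rule Least_equality)
    obtain u v where "u * a + v * b = gcd a b" using bezout_int by blast
    then show "2 * gcd a b > 0 \<and> 2 * gcd a b \<in> M" using False in_M[of u v] by simp
  next
    fix m assume m: "m > 0 \<and> m \<in> M"
    then obtain x y where "m = 2 * (x * a + y * b)" unfolding M by blast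
    then have "2 * gcd a b dvd m" by simp
    with m show "2 * gcd a b \<le> m" by (intro zdvd_imp_le) auto
  qed
  ultimately show ?thesis by (simp only: if_False)
qed (use M in auto)

theorem corollary1p2:
  fixes n :: nat and ps :: "(int \<times> int \<times> int \<times> int) list"
    and gzx gwy :: "real \<Rightarrow> real \<times> real"
  assumes "lagrangian_hypercube n ps"
    and "smoothing (G_zx n ps) gzx"
    and "smoothing (G_wy n ps) gwy"
  shows "\<exists>a b :: int. real_of_int a = grid_w (G_zx n ps) \<and> real_of_int b = grid_w (G_wy n ps) \<and>
           maslov_number gzx gwy = 2 * gcd a b"
proof -
  have "immersed_grid n (G_zx n ps)" "immersed_grid n (G_wy n ps)"
    using assms(1) by (simp_all add: lagrangian_hypercube_def lagrangian_grid_def)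
  obtain L1 r1 where "log_velocity gzx L1" "real_of_int r1 = grid_w (G_zx n ps)"
    "\<And>\<theta>. L1 (\<theta> + 2*pi) = L1 \<theta> + 2 * pi * \<i> * of_int r1"
    using smoothing_log_velocity[OF \<open>immersed_grid n (G_zx n ps)\<close> assms(2)] by blast
  moreover obtain L2 r2 where "log_velocity gwy L2" "real_of_int r2 = grid_w (G_wy n ps)"
    "\<And>\<theta>. L2 (\<theta> + 2*pi) = L2 \<theta> + 2 * pi * \<i> * of_int r2"
    using smoothing_log_velocity[OF \<open>immersed_grid n (G_wy n ps)\<close> assms(3)] by blast
  ultimately have "maslov_number gzx gwy = 2 * gcd r1 r2"
    unfolding maslov_number_def by (intro least_positive_even_combination maslov_indices_eq)
  with \<open>real_of_int r1 = _\<close> \<open>real_of_int r2 = _\<close> show ?thesis by blast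
qed

end
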